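(* Let $R$ be a $*$-ring. Then $R$ is strongly $J$-$*$-clean if and only if (1) $R$ is strongly $*$-clean; (2) $a+a^*\in J(R)$ for every $a\in R$; and (3) $J(R)=\{x\in R\mid 1+xx^*\in U(R)\}$.
   Context: All rings are associative with identity. A $*$-ring is a ring $R$ with an involution $*$, i.e. a map $a\mapsto a^*$ with $(a+b)^*=a^*+b^*$, $(ab)^*=b^*a^*$, $(a^* )^*=a$. $U(R)$ denotes the group of units and $J(R)$ the Jacobson radical of $R$. A projection is an element $e$ with $e^2=e=e^*$. $R$ is strongly $J$-$*$-clean if every $a\in R$ can be written $a=e+u$ with $e$ a projection, $u\in J(R)$ and $ae=ea$. $R$ is strongly $*$-clean if every $a\in R$ can be written $a=e+u$ with $e$ a projection, $u\in U(R)$ and $eu=ue$. *)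

theory Defs
  imports Main
begin

definition is_involution :: "('a::ring_1 \<Rightarrow> 'a) \<Rightarrow> bool" where
  "is_involution st \<longleftrightarrow>
     (\<forall>a b. st (a + b) = st a + st b) \<and>
     (\<forall>a b. st (a * b) = st b * st a) \<and>
     (\<forall>a. st (st a) = a)"

definition units :: "'a::ring_1 set" where
  "units = {u. \<exists>v. u * v = 1 \<and> v * u = 1}"

definition left_ideal :: "'a::ring_1 set \<Rightarrow> bool" where
  "left_ideal I \<longleftrightarrow> 0 \<in> I \<and> (\<forall>x\<in>I. \<forall>y\<in>I. x - y \<in> I) \<and> (\<forall>r. \<forall>x\<in>I. r * x \<in> I)"

definition maximal_left_ideal :: "'a::ring_1 set \<Rightarrow> bool" where
  "maximal_left_ideal I \<longleftrightarrow> left_ideal I \<and> I \<noteq> UNIV \<and>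
     (\<forall>K. left_ideal K \<and> I \<subseteq> K \<longrightarrow> K = I \<or> K = UNIV)"

definition jacobson :: "'a::ring_1 set" where
  "jacobson = \<Inter> {I. maximal_left_ideal I}"

definition projection :: "('a::ring_1 \<Rightarrow> 'a) \<Rightarrow> 'a \<Rightarrow> bool" where
  "projection st e \<longleftrightarrow> e * e = e \<and> st e = e"

definition strongly_J_star_clean :: "('a::ring_1 \<Rightarrow> 'a) \<Rightarrow> bool" where
  "strongly_J_star_clean st \<longleftrightarrow>
     (\<forall>a. \<exists>e u. a = e + u \<and> projection st e \<and> u \<in> jacobson \<and> a * e = e * a)"

definition strongly_star_clean :: "('a::ring_1 \<Rightarrow> 'a) \<Rightarrow> bool" where
  "strongly_star_clean st \<longleftrightarrow>
     (\<forall>a. \<exists>e u. a = e + u \<and> projection st e \<and> u \<in> units \<and> e * u = u * e)"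

end

theory Submission
  imports Defs
begin

text \<open>Both directions hinge on \<open>2 \<in> J(R)\<close>. Forward: decomposing \<open>-1 = e + j\<close> gives
  \<open>2 = (e + j)\<^sup>2 - (e + j) \<in> J(R)\<close>. Then \<open>a = e + j\<close> also reads \<open>a = (1 - e) + ((2e - 1) + j)\<close>,
  with \<open>2e - 1\<close> an involutory unit; \<open>a + a\<^sup>* = 2e + j + j\<^sup>* \<in> J(R)\<close>; and if \<open>1 + x x\<^sup>*\<close> is a unit for
  \<open>x = e + j\<close>, then \<open>x x\<^sup>* \<in> e + J(R)\<close> makes \<open>1 + e\<close> a unit, so \<open>e = (1 + e)\<^sup>-\<^sup>1 2e \<in> J(R)\<close>.
  Backward: \<open>2 = 1 + 1\<^sup>* \<in> J(R)\<close>, and for a unit \<open>u\<close> the element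
  \<open>1 + (1 + u)(1 + u)\<^sup>* = u u\<^sup>* + (2 + u + u\<^sup>*)\<close> is a unit, so \<open>1 + u \<in> J(R)\<close>; hence a strongly
  \<open>*\<close>-clean decomposition \<open>a = e + u\<close> turns into \<open>a = (1 - e) + ((1 + u) - 2 + 2e)\<close>.\<close>

lemma left_ideal_add: "left_ideal I \<Longrightarrow> x \<in> I \<Longrightarrow> y \<in> I \<Longrightarrow> x + y \<in> (I :: 'a::ring_1 set)"
  unfolding left_ideal_def by (metis diff_0 diff_minus_eq_add)

lemma left_ideal_eq_UNIV_if_left_invertible:
  assumes "left_ideal I" "a \<in> I" "v * a = 1"
  shows "I = (UNIV :: 'a::ring_1 set)"
proof -
  have "(r * v) * a \<in> I" for r
    using assms(1,2) unfolding left_ideal_def by blast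
  then show ?thesis using assms(3) by (metis UNIV_eq_I mult.assoc mult.right_neutral)
qed

lemma left_ideal_principal: "left_ideal {y * (a::'a::ring_1) | y. True}"
  unfolding left_ideal_def
  by (auto simp flip: left_diff_distrib mult.assoc) (metis mult_zero_left)

lemma left_ideal_add_principal:
  assumes "left_ideal M"
  shows "left_ideal {m + r * (x::'a::ring_1) | m r. m \<in> M}"
  unfolding left_ideal_def
proof (intro conjI ballI allI)
  have "0 = 0 + 0 * x" by simp
  then show "0 \<in> {m + r * x | m r. m \<in> M}"
    using assms unfolding left_ideal_def by blast
next
  fix a b assume "a \<in> {m + r * x | m r. m \<in> M}" "b \<in> {m + r * x | m r. m \<in> M}"
  then obtain m r m' r' where mr: "a = m + r * x" "b = m' + r' * x" "m \<in> M" "m' \<in> M" by blast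
  then have "a - b = (m - m') + (r - r') * x" by (simp add: algebra_simps)
  moreover have "m - m' \<in> M" using assms mr(3,4) unfolding left_ideal_def by blast
  ultimately show "a - b \<in> {m + r * x | m r. m \<in> M}" by blast
next
  fix s a assume "a \<in> {m + r * x | m r. m \<in> M}"
  then obtain m r where mr: "a = m + r * x" "m \<in> M" by blast
  then have "s * a = s * m + (s * r) * x" by (simp add: algebra_simps)
  moreover have "s * m \<in> M" using assms mr(2) unfolding left_ideal_def by blast
  ultimately show "s * a \<in> {m + r * x | m r. m \<in> M}" by blast
qed

lemma left_ideal_Union_chain:
  assumes "C \<noteq> {}" "\<And>I. I \<in> C \<Longrightarrow> left_ideal I" "subset.chain UNIV C"
  shows "left_ideal (\<Union>C :: 'a::ring_1 set)"
  unfolding left_ideal_def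
proof (intro conjI ballI allI)
  show "0 \<in> \<Union>C" using assms(1,2) unfolding left_ideal_def by blast
next
  fix x y assume "x \<in> \<Union>C" "y \<in> \<Union>C"
  then obtain X Y where XY: "X \<in> C" "Y \<in> C" "x \<in> X" "y \<in> Y" by blast
  then have "X \<subseteq> Y \<or> Y \<subseteq> X" using assms(3) unfolding subset.chain_def by blast
  then show "x - y \<in> \<Union>C"
    using XY assms(2)[of X] assms(2)[of Y] unfolding left_ideal_def by blast
next
  fix r x assume "x \<in> \<Union>C"
  then show "r * x \<in> \<Union>C" using assms(2) unfolding left_ideal_def by blast
qed

lemma ex_maximal_left_ideal:
  fixes L :: "'a::ring_1 set"
  assumes "left_ideal L" "1 \<notin> L"
  shows "\<exists>M. maximal_left_ideal M \<and> L \<subseteq> M"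
proof -
  let ?A = "{K. left_ideal K \<and> L \<subseteq> K \<and> 1 \<notin> K}"
  have "\<exists>M\<in>?A. \<forall>K\<in>?A. M \<subseteq> K \<longrightarrow> K = M"
  proof (rule subset_Zorn_nonempty)
    fix C assume "C \<noteq> {}" "subset.chain ?A C"
    moreover from this have "subset.chain UNIV C" by (auto simp: subset.chain_def)
    ultimately show "\<Union>C \<in> ?A"
      using left_ideal_Union_chain[of C] by (auto simp: subset.chain_def)
  qed (use assms in blast)
  then obtain M where M: "M \<in> ?A" and max: "\<forall>K\<in>?A. M \<subseteq> K \<longrightarrow> K = M" by blast
  have "maximal_left_ideal M"
    unfolding maximal_left_ideal_def
  proof (intro conjI allI impI)
    fix K assume "left_ideal K \<and> M \<subseteq> K"
    then show "K = M \<or> K = UNIV"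
      using M max left_ideal_eq_UNIV_if_left_invertible[of K 1 1] by auto
  qed (use M in auto)
  then show ?thesis using M by blast
qed

lemma left_ideal_jacobson: "left_ideal (jacobson :: 'a::ring_1 set)"
  unfolding left_ideal_def jacobson_def maximal_left_ideal_def
  by (auto simp: left_ideal_def)

lemma jacobson_left_invertible:
  assumes "(x::'a::ring_1) \<in> jacobson"
  shows "\<exists>v. v * (1 - r * x) = 1"
proof (rule ccontr)
  let ?L = "{y * (1 - r * x) | y. True}"
  assume "\<nexists>v. v * (1 - r * x) = 1"
  then have "1 \<notin> ?L" by auto
  then obtain M where M: "maximal_left_ideal M" "?L \<subseteq> M"
    using ex_maximal_left_ideal left_ideal_principal by blast
  then have LM: "left_ideal M" by (simp add: maximal_left_ideal_def)
  have "r * x \<in> M" using assms M(1) LM unfolding jacobson_def left_ideal_def by blast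
  moreover have "1 * (1 - r * x) \<in> ?L" by blast
  then have "1 - r * x \<in> M" using M(2) by auto
  ultimately have "r * x + (1 - r * x) \<in> M" by (rule left_ideal_add[OF LM])
  then have "1 \<in> M" by simp
  then have "M = UNIV" using left_ideal_eq_UNIV_if_left_invertible[OF LM] by force
  then show False using M(1) by (simp add: maximal_left_ideal_def)
qed

lemma jacobson_if_left_invertible:
  assumes "\<And>r. \<exists>v. v * (1 - r * x) = 1"
  shows "(x::'a::ring_1) \<in> jacobson"
  unfolding jacobson_def
proof
  fix M :: "'a set" assume "M \<in> {I. maximal_left_ideal I}"
  then have M: "left_ideal M" "M \<noteq> UNIV" "\<And>K. left_ideal K \<Longrightarrow> M \<subseteq> K \<Longrightarrow> K = M \<or> K = UNIV"
    by (auto simp: maximal_left_ideal_def)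
  let ?K = "{m + r * x | m r. m \<in> M}"
  show "x \<in> M"
  proof (rule ccontr)
    assume "x \<notin> M"
    have "m = m + 0 * x" for m by simp
    then have MK: "M \<subseteq> ?K" by blast
    have "x = 0 + 1 * x" "0 \<in> M" using M(1) by (simp_all add: left_ideal_def)
    then have "?K \<noteq> M" using \<open>x \<notin> M\<close> by blast
    then have "?K = UNIV" using M(3)[OF left_ideal_add_principal[OF M(1)] MK] by blast
    then obtain m r where m: "1 = m + r * x" "m \<in> M" by blast
    then have "m = 1 - r * x" by (simp add: eq_diff_eq)
    moreover obtain v where "v * (1 - r * x) = 1" using assms by blast
    ultimately have "v * m = 1" by simp
    then show False using M(1,2) m(2) left_ideal_eq_UNIV_if_left_invertible by blast
  qed
qed

lemma units_mult: "u \<in> units \<Longrightarrow> w \<in> units \<Longrightarrow> u * (w::'a::ring_1) \<in> units"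
  unfolding units_def
  by clarify (metis mult.assoc mult_1_left)

lemma units_if_inverse: "u * v = 1 \<Longrightarrow> v * u = 1 \<Longrightarrow> (u::'a::ring_1) \<in> units"
  unfolding units_def by blast

text \<open>A left inverse of \<open>1 - r x\<close> is itself of the form \<open>1 - r' x\<close>, hence left invertible too.\<close>
lemma jacobson_units_diff_mult:
  assumes "(x::'a::ring_1) \<in> jacobson"
  shows "1 - r * x \<in> units"
proof -
  obtain u where u: "u * (1 - r * x) = 1" using assms jacobson_left_invertible by blast
  then have "u = 1 - (- u * r) * x" by (simp add: algebra_simps)
  then obtain w where w: "w * u = 1" using assms jacobson_left_invertible by metis
  have "w = w * (u * (1 - r * x))" using u by simp
  also have "\<dots> = 1 - r * x" using w by (metis mult.assoc mult_1_left)
  finally show ?thesis using u w units_if_inverse by auto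
qed

lemma units_one_diff_mult_commute:
  assumes "1 - a * (b::'a::ring_1) \<in> units"
  shows "1 - b * a \<in> units"
proof -
  obtain v where "(1 - a * b) * v = 1" "v * (1 - a * b) = 1" using assms units_def by blast
  then have v: "v - a * b * v = 1" "v - v * a * b = 1" by (simp_all add: algebra_simps)
  let ?w = "1 + b * v * a"
  have "(1 - b * a) * ?w = 1 - b * a + b * (v - a * b * v) * a" by (simp add: algebra_simps)
  moreover have "?w * (1 - b * a) = 1 - b * a + b * (v - v * a * b) * a" by (simp add: algebra_simps)
  ultimately show ?thesis using v units_if_inverse by auto
qed

lemma mem_jacobson_iff_units_left: "(x::'a::ring_1) \<in> jacobson \<longleftrightarrow> (\<forall>r. 1 - r * x \<in> units)"
  using jacobson_units_diff_mult jacobson_if_left_invertible unfolding units_def by blast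

lemma mem_jacobson_iff_units_right: "(x::'a::ring_1) \<in> jacobson \<longleftrightarrow> (\<forall>r. 1 - x * r \<in> units)"
  using mem_jacobson_iff_units_left units_one_diff_mult_commute by blast

lemma jacobson_mult_right: "(x::'a::ring_1) \<in> jacobson \<Longrightarrow> x * r \<in> jacobson"
  unfolding mem_jacobson_iff_units_right by (metis mult.assoc)

lemma jacobson_mult_left: "(x::'a::ring_1) \<in> jacobson \<Longrightarrow> r * x \<in> jacobson"
  using left_ideal_jacobson unfolding left_ideal_def by blast

lemma jacobson_add: "(x::'a::ring_1) \<in> jacobson \<Longrightarrow> y \<in> jacobson \<Longrightarrow> x + y \<in> jacobson"
  using left_ideal_jacobson left_ideal_add by blast

lemma jacobson_diff: "(x::'a::ring_1) \<in> jacobson \<Longrightarrow> y \<in> jacobson \<Longrightarrow> x - y \<in> jacobson"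
  using left_ideal_jacobson unfolding left_ideal_def by blast

lemma jacobson_double: "(2::'a::ring_1) \<in> jacobson \<Longrightarrow> (x::'a) + x \<in> jacobson"
  using jacobson_mult_right[of 2 x] by (simp add: mult_2)

lemma units_add_jacobson:
  assumes "u \<in> units" "(j::'a::ring_1) \<in> jacobson"
  shows "u + j \<in> units"
proof -
  obtain v where v: "u * v = 1" "v * u = 1" using assms(1) units_def by blast
  have "u * (1 - (- v) * j) \<in> units"
    using units_mult assms jacobson_units_diff_mult by blast
  moreover have "u * (1 - (- v) * j) = u + j" using v by (simp add: algebra_simps flip: mult.assoc)
  ultimately show ?thesis by simp
qed

lemma jacobson_imp_units_one_add_mult: "(x::'a::ring_1) \<in> jacobson \<Longrightarrow> 1 + x * y \<in> units"
  using jacobson_units_diff_mult[of "x * y" "-1"] jacobson_mult_right by auto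

lemma square_diff_in_jacobson_if_idempotent:
  assumes "e * e = e" "(j::'a::ring_1) \<in> jacobson"
  shows "(e + j) * (e + j) - (e + j) \<in> jacobson"
proof -
  have "(e + j) * (e + j) - (e + j) = e * j + j * e + j * j - j"
    using assms(1) by (simp add: algebra_simps)
  also have "\<dots> \<in> jacobson"
    using assms(2) by (intro jacobson_add jacobson_diff jacobson_mult_left jacobson_mult_right)
  finally show ?thesis .
qed

text \<open>The unit is \<open>(2e - 1) + j\<close>, and \<open>2e - 1\<close> is its own inverse.\<close>
lemma strongly_clean_if_idempotent_add_jacobson:
  assumes "a = e + j" "e * e = e" "(j::'a::ring_1) \<in> jacobson" "a * e = e * a"
  shows "\<exists>u. a = (1 - e) + u \<and> u \<in> units \<and> (1 - e) * u = u * (1 - e)"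
proof (intro exI conjI)
  have "2 * e - 1 \<in> units"
    by (rule units_if_inverse[where v = "2 * e - 1"]) (simp_all add: algebra_simps assms(2) mult_2 mult_2_right)
  then show "(2 * e - 1) + j \<in> units" using assms(3) units_add_jacobson by blast
  show "a = (1 - e) + ((2 * e - 1) + j)" using assms(1) by (simp add: algebra_simps mult_2)
  have "e * j = j * e" using assms(1,2,4) by (simp add: algebra_simps)
  then show "(1 - e) * ((2 * e - 1) + j) = ((2 * e - 1) + j) * (1 - e)"
    by (simp add: algebra_simps mult_2 mult_2_right)
qed

context
  fixes st :: "'a::ring_1 \<Rightarrow> 'a"
  assumes inv: "is_involution st"
begin

lemma st_add: "st (a + b) = st a + st b"
  using inv is_involution_def by blast

lemma st_mult: "st (a * b) = st b * st a"
  using inv is_involution_def by blast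

lemma st_st: "st (st a) = a"
  using inv is_involution_def by blast

lemma st_diff: "st (a - b) = st a - st b"
proof -
  have "st (a - b) + st b = st a" using st_add[of "a - b" b] by simp
  then show ?thesis by (simp add: eq_diff_eq)
qed

lemma st_1: "st 1 = 1"
  using st_mult[of 1 "st 1"] by (simp add: st_st)

lemma st_units:
  assumes "u \<in> units"
  shows "st u \<in> units"
proof -
  obtain v where "u * v = 1" "v * u = 1" using assms units_def by blast
  then have "st u * st v = 1" "st v * st u = 1"
    using st_mult[of v u] st_mult[of u v] st_1 by simp_all
  then show ?thesis by (rule units_if_inverse)
qed

lemma st_jacobson:
  assumes "x \<in> jacobson"
  shows "st x \<in> jacobson"
  unfolding mem_jacobson_iff_units_left
proof
  fix r
  have "st (1 - x * st r) \<in> units"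
    using assms mem_jacobson_iff_units_right st_units by blast
  then show "1 - r * st x \<in> units" by (simp add: st_diff st_1 st_mult st_st)
qed

lemma projection_one_diff: "projection st e \<Longrightarrow> projection st (1 - e)"
  unfolding projection_def by (simp add: algebra_simps st_diff st_1)

lemma one_add_in_jacobson_if_units:
  fixes u :: 'a
  assumes two: "(2::'a) \<in> jacobson" and sym: "\<And>a. a + st a \<in> jacobson"
    and J: "jacobson = {x. 1 + x * st x \<in> units}" and u: "u \<in> units"
  shows "1 + u \<in> jacobson"
proof -
  have "u * st u + (2 + (u + st u)) \<in> units"
    using units_add_jacobson[OF units_mult[OF u st_units[OF u]] jacobson_add[OF two sym]] .
  moreover have "1 + (1 + u) * st (1 + u) = u * st u + (2 + (u + st u))"
    by (simp add: st_add st_1 algebra_simps)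
  ultimately show ?thesis by (simp add: J)
qed

lemma jacobson_if_units_one_add_mult_st:
  assumes "(2::'a) \<in> jacobson" "x = e + j" "projection st e" "j \<in> jacobson"
    and "1 + x * st x \<in> units"
  shows "x \<in> jacobson"
proof -
  have e: "st e = e" "e * e = e" using assms(3) projection_def by blast+
  define k where "k = e * st j + j * e + j * st j"
  have "k \<in> jacobson"
    unfolding k_def using assms(4) st_jacobson
    by (simp add: jacobson_add jacobson_mult_left jacobson_mult_right)
  then have "- k \<in> jacobson" using jacobson_mult_left[of k "-1"] by simp
  then have "(1 + x * st x) + (- k) \<in> units" by (rule units_add_jacobson[OF assms(5)])
  moreover have "(1 + x * st x) + (- k) = 1 + e"
    unfolding k_def using assms(2) e by (simp add: st_add algebra_simps)
  ultimately have "1 + e \<in> units" by (simp only:)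
  then obtain w where w: "w * (1 + e) = 1" unfolding units_def by blast
  have "e = w * ((1 + e) * e)" using w by (simp flip: mult.assoc)
  also have "\<dots> = w * (e + e)" using e by (simp add: algebra_simps)
  finally have "w * (e + e) = e" by simp
  with jacobson_mult_left[OF jacobson_double[OF assms(1)]] have "e \<in> jacobson" by (rule back_subst)
  then show ?thesis using assms(2,4) jacobson_add by blast
qed

lemma strongly_J_star_clean_imp:
  assumes H: "strongly_J_star_clean st"
  shows "strongly_star_clean st \<and> (\<forall>a. a + st a \<in> jacobson) \<and> jacobson = {x. 1 + x * st x \<in> units}"
proof -
  from H have dec: "\<exists>e j. a = e + j \<and> projection st e \<and> j \<in> jacobson \<and> a * e = e * a" for a
    by (simp add: strongly_J_star_clean_def)
  obtain e j where ej: "-1 = e + j" "projection st e" "j \<in> jacobson" using dec[of "-1"] by blast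
  then have "(e + j) * (e + j) - (e + j) \<in> jacobson"
    using square_diff_in_jacobson_if_idempotent projection_def by blast
  then have two: "(2::'a) \<in> jacobson" by (simp flip: ej(1))
  have "strongly_star_clean st"
    unfolding strongly_star_clean_def
  proof
    fix a
    obtain e j where ej: "a = e + j" "projection st e" "j \<in> jacobson" "a * e = e * a"
      using dec by blast
    then have "e * e = e" by (simp add: projection_def)
    then show "\<exists>f u. a = f + u \<and> projection st f \<and> u \<in> units \<and> f * u = u * f"
      using strongly_clean_if_idempotent_add_jacobson[OF ej(1) _ ej(3,4)] projection_one_diff[OF ej(2)]
      by blast
  qed
  moreover have "a + st a \<in> jacobson" for a
  proof -
    obtain e j where ej: "a = e + j" "projection st e" "j \<in> jacobson" using dec by blast
    then have "a + st a = (e + e) + (j + st j)" by (simp add: projection_def st_add algebra_simps)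
    then show ?thesis
      using jacobson_add[OF jacobson_double[OF two] jacobson_add[OF ej(3) st_jacobson[OF ej(3)]]]
      by simp
  qed
  moreover have "jacobson = {x. 1 + x * st x \<in> units}"
  proof (intro set_eqI iffI)
    fix x assume "x \<in> {x. 1 + x * st x \<in> units}"
    moreover obtain e j where "x = e + j" "projection st e" "j \<in> jacobson" using dec by blast
    ultimately show "x \<in> jacobson" using jacobson_if_units_one_add_mult_st[OF two] by blast
  qed (simp add: jacobson_imp_units_one_add_mult)
  ultimately show ?thesis by blast
qed

lemma strongly_J_star_clean_if:
  assumes sc: "strongly_star_clean st" and sym: "\<And>a. a + st a \<in> jacobson"
    and J: "jacobson = {x. 1 + x * st x \<in> units}"
  shows "strongly_J_star_clean st"
  unfolding strongly_J_star_clean_def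
proof
  fix a
  have two: "(2::'a) \<in> jacobson" using sym[of 1] by (simp add: st_1)
  obtain e u where eu: "a = e + u" "projection st e" "u \<in> units" "e * u = u * e"
    using sc unfolding strongly_star_clean_def by blast
  have "(1 + u) - 2 + (e + e) \<in> jacobson"
    using jacobson_add[OF jacobson_diff[OF one_add_in_jacobson_if_units[OF two sym J eu(3)] two]
        jacobson_double[OF two]] .
  moreover have "a = (1 - e) + ((1 + u) - 2 + (e + e))" using eu(1) by (simp add: algebra_simps)
  moreover have "a * (1 - e) = (1 - e) * a" using eu(1,2,4) by (simp add: projection_def algebra_simps)
  ultimately show "\<exists>f j. a = f + j \<and> projection st f \<and> j \<in> jacobson \<and> a * f = f * a"
    using projection_one_diff[OF eu(2)] by blast
qed

end

theorem corollary3p5: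
  fixes st :: "'a::ring_1 \<Rightarrow> 'a"
  assumes "is_involution st"
  shows "strongly_J_star_clean st \<longleftrightarrow>
           (strongly_star_clean st \<and>
            (\<forall>a. a + st a \<in> (jacobson :: 'a set)) \<and>
            (jacobson :: 'a set) = {x. 1 + x * st x \<in> units})"
  using strongly_J_star_clean_imp[OF assms] strongly_J_star_clean_if[OF assms] by blast

end
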